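(* Let $\models$ be an intersective mixed consequence truth-relation on a finite set $V$ of truth values, with induced consequence relation $\vdash$ in a constant expressive setting. The following are equivalent: (i) $\vdash$ admits a G-disjunction; (ii) every minimal representation of $\models$ is based on a disjunction-compatible list of sets of designated values; (iii) some representation of $\models$ is based on a disjunction-compatible list of sets of designated values.
   Context: $V$ contains distinct $1,0$; sets of designated values: $\mathcal{D}\subseteq V$, $1\in\mathcal{D}$, $0\notin\mathcal{D}$. $\gamma\models_{\mathcal{D}_p,\mathcal{D}_c}\delta$ iff ($\gamma\subseteq\mathcal{D}_p\Rightarrow\delta\cap\mathcal{D}_c\neq\emptyset$). An intersective mixed truth-relation is $\models_{\mathcal{D}_p^1,\mathcal{D}_c^1}\cap\dots\cap\models_{\mathcal{D}_p^K,\mathcal{D}_c^K}$; such a list is a representation, based on the list of sets $\mathcal{D}_p^1,\mathcal{D}_c^1,\dots,\mathcal{D}_p^K,\mathcal{D}_c^K$; it is minimal if $K$ is least possible. A list $\mathcal{D}_1,\dots,\mathcal{D}_n$ is disjunction-compatible if for all $x,y\in V$ there is $z\in V$ such that for every $i$: $z\in\mathcal{D}_i$ iff ($x\in\mathcal{D}_i$ or $y\in\mathcal{D}_i$). Semantics: valuations mapping atoms to $V$, connectives interpreted by fixed truth functions, extended compositionally, every assignment to finitely many distinct atoms realized; constant expressive: every value is the constant value of some formula. $\Gamma\vdash\Delta$ iff $v(\Gamma)\models v(\Delta)$ for all $v$. A G-disjunction is a binary connective $\vee$ (interpreted by some truth function) with, for all $\Gamma,\Delta,A,B$: $\Gamma\vdash\{A\vee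 B\}\cup\Delta$ iff $\Gamma\vdash\{A,B\}\cup\Delta$; and $\Gamma\cup\{A\vee B\}\vdash\Delta$ iff ($\Gamma\cup\{A\}\vdash\Delta$ and $\Gamma\cup\{B\}\vdash\Delta$). *)

theory Defs
  imports Main
begin

definition designated :: "'v set \<Rightarrow> 'v \<Rightarrow> 'v \<Rightarrow> 'v set \<Rightarrow> bool" where
  "designated V one zero D \<longleftrightarrow> D \<subseteq> V \<and> one \<in> D \<and> zero \<notin> D"

definition mixed_sat :: "'v set \<Rightarrow> 'v set \<Rightarrow> 'v set \<Rightarrow> 'v set \<Rightarrow> bool" where
  "mixed_sat Dp Dc \<gamma> \<delta> \<longleftrightarrow> (\<gamma> \<subseteq> Dp \<longrightarrow> \<delta> \<inter> Dc \<noteq> {})"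

definition is_rep :: "'v set \<Rightarrow> 'v \<Rightarrow> 'v \<Rightarrow> ('v set \<Rightarrow> 'v set \<Rightarrow> bool)
                      \<Rightarrow> ('v set \<times> 'v set) list \<Rightarrow> bool" where
  "is_rep V one zero R L \<longleftrightarrow>
     L \<noteq> [] \<and>
     (\<forall>k < length L. designated V one zero (fst (L ! k)) \<and> designated V one zero (snd (L ! k))) \<and>
     (\<forall>\<gamma> \<delta>. \<gamma> \<subseteq> V \<longrightarrow> \<delta> \<subseteq> V \<longrightarrow>
        (R \<gamma> \<delta> \<longleftrightarrow> (\<forall>k < length L. mixed_sat (fst (L ! k)) (snd (L ! k)) \<gamma> \<delta>)))"

definition intersective_mixed :: "'v set \<Rightarrow> 'v \<Rightarrow> 'v \<Rightarrow> ('v set \<Rightarrow> 'v set \<Rightarrow> bool) \<Rightarrow> bool" where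
  "intersective_mixed V one zero R \<longleftrightarrow> (\<exists>L. is_rep V one zero R L)"

definition minimal_rep :: "'v set \<Rightarrow> 'v \<Rightarrow> 'v \<Rightarrow> ('v set \<Rightarrow> 'v set \<Rightarrow> bool)
                      \<Rightarrow> ('v set \<times> 'v set) list \<Rightarrow> bool" where
  "minimal_rep V one zero R L \<longleftrightarrow>
     is_rep V one zero R L \<and> (\<forall>L'. is_rep V one zero R L' \<longrightarrow> length L \<le> length L')"

definition based_list :: "('v set \<times> 'v set) list \<Rightarrow> 'v set list" where
  "based_list L = concat (map (\<lambda>(p, c). [p, c]) L)"

definition disj_compatible :: "'v set \<Rightarrow> 'v set list \<Rightarrow> bool" where
  "disj_compatible V Ds \<longleftrightarrow>
     (\<forall>x\<in>V. \<forall>y\<in>V. \<exists>z\<in>V. \<forall>i < length Ds. (z \<in> Ds ! i \<longleftrightarrow> (x \<in> Ds ! i \<or> y \<in> Ds ! i)))"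

datatype 'c fm = Atom nat | App 'c "'c fm list"

fun wf :: "('c \<Rightarrow> nat) \<Rightarrow> 'c fm \<Rightarrow> bool" where
  "wf ar (Atom n) = True"
| "wf ar (App c As) = (length As = ar c \<and> (\<forall>A\<in>set As. wf ar A))"

fun eval :: "('c \<Rightarrow> 'v list \<Rightarrow> 'v) \<Rightarrow> (nat \<Rightarrow> 'v) \<Rightarrow> 'c fm \<Rightarrow> 'v" where
  "eval I v (Atom n) = v n"
| "eval I v (App c As) = I c (map (eval I v) As)"

definition truth_functional :: "'v set \<Rightarrow> ('c \<Rightarrow> nat) \<Rightarrow> ('c \<Rightarrow> 'v list \<Rightarrow> 'v) \<Rightarrow> bool" where
  "truth_functional V ar I \<longleftrightarrow>
     (\<forall>c xs. length xs = ar c \<longrightarrow> set xs \<subseteq> V \<longrightarrow> I c xs \<in> V)"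

text \<open>Valuations: all maps from atoms to V (so every assignment to finitely many atoms is realized).\<close>
definition valuation :: "'v set \<Rightarrow> (nat \<Rightarrow> 'v) \<Rightarrow> bool" where
  "valuation V v \<longleftrightarrow> (\<forall>n. v n \<in> V)"

definition constant_expressive :: "'v set \<Rightarrow> ('c \<Rightarrow> nat) \<Rightarrow> ('c \<Rightarrow> 'v list \<Rightarrow> 'v) \<Rightarrow> bool" where
  "constant_expressive V ar I \<longleftrightarrow>
     (\<forall>x\<in>V. \<exists>A. wf ar A \<and> (\<forall>v. valuation V v \<longrightarrow> eval I v A = x))"

definition conseq :: "'v set \<Rightarrow> ('c \<Rightarrow> 'v list \<Rightarrow> 'v) \<Rightarrow> ('v set \<Rightarrow> 'v set \<Rightarrow> bool)
                      \<Rightarrow> 'c fm set \<Rightarrow> 'c fm set \<Rightarrow> bool" where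
  "conseq V I R \<Gamma> \<Delta> \<longleftrightarrow> (\<forall>v. valuation V v \<longrightarrow> R (eval I v ` \<Gamma>) (eval I v ` \<Delta>))"

text \<open>The language extended with a new binary connective (None) interpreted by the truth function f.\<close>
fun ext_ar :: "('c \<Rightarrow> nat) \<Rightarrow> 'c option \<Rightarrow> nat" where
  "ext_ar ar None = 2"
| "ext_ar ar (Some c) = ar c"

fun ext_I :: "('c \<Rightarrow> 'v list \<Rightarrow> 'v) \<Rightarrow> ('v \<Rightarrow> 'v \<Rightarrow> 'v) \<Rightarrow> 'c option \<Rightarrow> 'v list \<Rightarrow> 'v" where
  "ext_I I f None xs = f (xs ! 0) (xs ! 1)"
| "ext_I I f (Some c) xs = I c xs"

definition Disj :: "'c option fm \<Rightarrow> 'c option fm \<Rightarrow> 'c option fm" where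
  "Disj A B = App None [A, B]"

definition admits_G_disjunction :: "'v set \<Rightarrow> ('v set \<Rightarrow> 'v set \<Rightarrow> bool)
                      \<Rightarrow> ('c \<Rightarrow> nat) \<Rightarrow> ('c \<Rightarrow> 'v list \<Rightarrow> 'v) \<Rightarrow> bool" where
  "admits_G_disjunction V R ar I \<longleftrightarrow>
     (\<exists>f. (\<forall>x\<in>V. \<forall>y\<in>V. f x y \<in> V) \<and>
       (\<forall>\<Gamma> \<Delta> A B. (\<forall>C\<in>\<Gamma>. wf (ext_ar ar) C) \<longrightarrow> (\<forall>C\<in>\<Delta>. wf (ext_ar ar) C) \<longrightarrow>
          wf (ext_ar ar) A \<longrightarrow> wf (ext_ar ar) B \<longrightarrow>
          (conseq V (ext_I I f) R \<Gamma> ({Disj A B} \<union> \<Delta>) \<longleftrightarrow> conseq V (ext_I I f) R \<Gamma> ({A, B} \<union> \<Delta>)) \<and>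
          (conseq V (ext_I I f) R (\<Gamma> \<union> {Disj A B}) \<Delta> \<longleftrightarrow>
             (conseq V (ext_I I f) R (\<Gamma> \<union> {A}) \<Delta> \<and> conseq V (ext_I I f) R (\<Gamma> \<union> {B}) \<Delta>))))"

end

theory Submission
  imports Defs
begin

text \<open>Over a representation \<open>L\<close>, a sequent \<open>\<gamma> \<turnstile> \<delta>\<close> of truth values fails exactly when some
  pair \<open>(p, c)\<close> of \<open>L\<close> has \<open>\<gamma> \<subseteq> p\<close> and \<open>\<delta> \<inter> c = {}\<close>. By constant expressiveness, a
  G-disjunction interpreted by \<open>f\<close> is the same as the two G-rules for \<open>f\<close> holding on sequents
  of truth values. In a minimal representation no pair is dominated by another one, so the
  sequents \<open>\<gamma> \<turnstile> S \<union> (V - c)\<close> with \<open>p \<subseteq> \<gamma>\<close> are refuted by \<open>(p, c)\<close> alone; testing the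
  G-rules on them shows that \<open>f x y\<close> lies in \<open>p\<close> (in \<open>c\<close>) exactly when \<open>x\<close> or \<open>y\<close> does.
  Conversely, a value joining \<open>x\<close> and \<open>y\<close> in every designated set of some representation
  satisfies the G-rules conjunct by conjunct.\<close>

lemma is_rep_iff:
  "is_rep V one zero R L \<longleftrightarrow> L \<noteq> [] \<and>
     (\<forall>(p, c)\<in>set L. designated V one zero p \<and> designated V one zero c) \<and>
     (\<forall>\<gamma> \<delta>. \<gamma> \<subseteq> V \<longrightarrow> \<delta> \<subseteq> V \<longrightarrow> (R \<gamma> \<delta> \<longleftrightarrow> (\<forall>(p, c)\<in>set L. mixed_sat p c \<gamma> \<delta>)))"
  unfolding is_rep_def by (simp add: all_set_conv_all_nth split_beta)

lemma is_rep_sat_iff: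
  "is_rep V one zero R L \<Longrightarrow> \<gamma> \<subseteq> V \<Longrightarrow> \<delta> \<subseteq> V \<Longrightarrow>
     R \<gamma> \<delta> \<longleftrightarrow> (\<forall>(p, c)\<in>set L. mixed_sat p c \<gamma> \<delta>)"
  unfolding is_rep_iff by blast

lemma is_rep_designated:
  "is_rep V one zero R L \<Longrightarrow> (p, c) \<in> set L \<Longrightarrow> designated V one zero p \<and> designated V one zero c"
  unfolding is_rep_iff by blast

lemma not_sat_iff_refuting_pair:
  assumes "is_rep V one zero R L" "\<gamma> \<subseteq> V" "\<delta> \<subseteq> V"
  shows "\<not> R \<gamma> \<delta> \<longleftrightarrow> (\<exists>(p, c)\<in>set L. \<gamma> \<subseteq> p \<and> \<delta> \<inter> c = {})"
proof -
  have "R \<gamma> \<delta> \<longleftrightarrow> (\<forall>(p, c)\<in>set L. \<gamma> \<subseteq> p \<longrightarrow> \<delta> \<inter> c \<noteq> {})"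
    using is_rep_sat_iff[OF assms] unfolding mixed_sat_def .
  then show ?thesis
    by (simp add: Ball_def Bex_def split_paired_All split_paired_Ex)
qed

lemma is_rep_remove1_dominated:
  assumes rep: "is_rep V one zero R L"
    and dom: "(p', c') \<in> set (remove1 (p, c) L)" "p \<subseteq> p'" "c' \<subseteq> c"
  shows "is_rep V one zero R (remove1 (p, c) L)"
proof -
  let ?L' = "remove1 (p, c) L"
  have sub: "set ?L' \<subseteq> set L"
    by (rule set_remove1_subset)
  have set_L: "set L \<subseteq> insert (p, c) (set ?L')"
    by (metis in_set_remove1 insertCI subsetI)
  have sat_iff: "(\<forall>(q, d)\<in>set L. mixed_sat q d \<gamma> \<delta>) \<longleftrightarrow> (\<forall>(q, d)\<in>set ?L'. mixed_sat q d \<gamma> \<delta>)"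
    for \<gamma> \<delta>
  proof
    assume "\<forall>(q, d)\<in>set L. mixed_sat q d \<gamma> \<delta>"
    then show "\<forall>(q, d)\<in>set ?L'. mixed_sat q d \<gamma> \<delta>"
      using sub by blast
  next
    assume sat': "\<forall>(q, d)\<in>set ?L'. mixed_sat q d \<gamma> \<delta>"
    then have "mixed_sat p' c' \<gamma> \<delta>"
      using dom(1) by fastforce
    then have "mixed_sat p c \<gamma> \<delta>"
      using dom(2,3) unfolding mixed_sat_def by blast
    then show "\<forall>(q, d)\<in>set L. mixed_sat q d \<gamma> \<delta>"
      using sat' set_L by blast
  qed
  show ?thesis
    unfolding is_rep_iff
  proof (intro conjI allI impI)
    show "?L' \<noteq> []"
      using dom(1) by auto
    show "\<forall>(q, d)\<in>set ?L'. designated V one zero q \<and> designated V one zero d"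
      using is_rep_designated[OF rep] sub by blast
    show "R \<gamma> \<delta> \<longleftrightarrow> (\<forall>(q, d)\<in>set ?L'. mixed_sat q d \<gamma> \<delta>)" if "\<gamma> \<subseteq> V" "\<delta> \<subseteq> V" for \<gamma> \<delta>
      unfolding is_rep_sat_iff[OF rep that] by (rule sat_iff)
  qed
qed

lemma minimal_rep_is_rep: "minimal_rep V one zero R L \<Longrightarrow> is_rep V one zero R L"
  unfolding minimal_rep_def by blast

lemma minimal_rep_undominated:
  assumes min: "minimal_rep V one zero R L"
    and "(p, c) \<in> set L" "(p', c') \<in> set L" "p \<subseteq> p'" "c' \<subseteq> c"
  shows "(p', c') = (p, c)"
proof (rule ccontr)
  assume "(p', c') \<noteq> (p, c)"
  then have "(p', c') \<in> set (remove1 (p, c) L)"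
    using assms(3) by simp
  with minimal_rep_is_rep[OF min] have "is_rep V one zero R (remove1 (p, c) L)"
    using assms(4,5) by (intro is_rep_remove1_dominated)
  then have "length L \<le> length (remove1 (p, c) L)"
    using min unfolding minimal_rep_def by blast
  moreover have "length (remove1 (p, c) L) = length L - 1"
    using assms(2) by (simp add: length_remove1)
  ultimately show False
    using length_pos_if_in_set[OF assms(2)] by linarith
qed

lemma minimal_rep_refutation_iff:
  assumes min: "minimal_rep V one zero R L" and pc: "(p, c) \<in> set L"
    and "p \<subseteq> \<gamma>" "\<gamma> \<subseteq> V" "S \<subseteq> V"
  shows "\<not> R \<gamma> (S \<union> (V - c)) \<longleftrightarrow> \<gamma> \<subseteq> p \<and> S \<inter> c = {}"
proof -
  note rep = minimal_rep_is_rep[OF min]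
  have "S \<union> (V - c) \<subseteq> V"
    using \<open>S \<subseteq> V\<close> by blast
  then have "\<not> R \<gamma> (S \<union> (V - c)) \<longleftrightarrow> (\<exists>(p', c')\<in>set L. \<gamma> \<subseteq> p' \<and> (S \<union> (V - c)) \<inter> c' = {})"
    by (rule not_sat_iff_refuting_pair[OF rep \<open>\<gamma> \<subseteq> V\<close>])
  also have "\<dots> \<longleftrightarrow> \<gamma> \<subseteq> p \<and> S \<inter> c = {}"
  proof
    assume "\<exists>(p', c')\<in>set L. \<gamma> \<subseteq> p' \<and> (S \<union> (V - c)) \<inter> c' = {}"
    then obtain p' c' where pc': "(p', c') \<in> set L" "\<gamma> \<subseteq> p'" "(S \<union> (V - c)) \<inter> c' = {}"
      by blast
    have "c' \<subseteq> V"
      using is_rep_designated[OF rep pc'(1)] unfolding designated_def by blast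
    with pc'(3) have "c' \<subseteq> c" by blast
    then have "(p', c') = (p, c)"
      using minimal_rep_undominated[OF min pc pc'(1)] pc'(2) \<open>p \<subseteq> \<gamma>\<close> by blast
    then show "\<gamma> \<subseteq> p \<and> S \<inter> c = {}"
      using pc'(2,3) by blast
  next
    assume "\<gamma> \<subseteq> p \<and> S \<inter> c = {}"
    then show "\<exists>(p', c')\<in>set L. \<gamma> \<subseteq> p' \<and> (S \<union> (V - c)) \<inter> c' = {}"
      using pc by blast
  qed
  finally show ?thesis .
qed

lemma minimal_rep_exists:
  "intersective_mixed V one zero R \<Longrightarrow> \<exists>L. minimal_rep V one zero R L"
  unfolding intersective_mixed_def minimal_rep_def
  using ex_has_least_nat[where P = "is_rep V one zero R" and m = length] by blast

definition G_disjunctive :: "'v set \<Rightarrow> ('v set \<Rightarrow> 'v set \<Rightarrow> bool) \<Rightarrow> ('v \<Rightarrow> 'v \<Rightarrow> 'v) \<Rightarrow> bool" where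
  "G_disjunctive V R f \<longleftrightarrow>
     (\<forall>x\<in>V. \<forall>y\<in>V. f x y \<in> V \<and>
        (\<forall>\<gamma> \<delta>. \<gamma> \<subseteq> V \<longrightarrow> \<delta> \<subseteq> V \<longrightarrow>
           (R \<gamma> ({f x y} \<union> \<delta>) \<longleftrightarrow> R \<gamma> ({x, y} \<union> \<delta>)) \<and>
           (R (\<gamma> \<union> {f x y}) \<delta> \<longleftrightarrow> R (\<gamma> \<union> {x}) \<delta> \<and> R (\<gamma> \<union> {y}) \<delta>)))"

lemma G_disjunctiveD:
  assumes "G_disjunctive V R f" "x \<in> V" "y \<in> V"
  shows "f x y \<in> V"
    and "\<gamma> \<subseteq> V \<Longrightarrow> \<delta> \<subseteq> V \<Longrightarrow> R \<gamma> ({f x y} \<union> \<delta>) \<longleftrightarrow> R \<gamma> ({x, y} \<union> \<delta>)"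
    and "\<gamma> \<subseteq> V \<Longrightarrow> \<delta> \<subseteq> V \<Longrightarrow> R (\<gamma> \<union> {f x y}) \<delta> \<longleftrightarrow> R (\<gamma> \<union> {x}) \<delta> \<and> R (\<gamma> \<union> {y}) \<delta>"
  using assms unfolding G_disjunctive_def by blast+

lemma set_based_list: "set (based_list L) = (\<Union>(p, c)\<in>set L. {p, c})"
  unfolding based_list_def by (induction L) auto

lemma disj_compatible_iff:
  "disj_compatible V Ds \<longleftrightarrow>
     (\<forall>x\<in>V. \<forall>y\<in>V. \<exists>z\<in>V. \<forall>D\<in>set Ds. z \<in> D \<longleftrightarrow> x \<in> D \<or> y \<in> D)"
  unfolding disj_compatible_def by (simp add: all_set_conv_all_nth)

lemma mixed_sat_join_conclusion:
  "(z \<in> c \<longleftrightarrow> x \<in> c \<or> y \<in> c) \<Longrightarrow>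
     mixed_sat p c \<gamma> ({z} \<union> \<delta>) \<longleftrightarrow> mixed_sat p c \<gamma> ({x, y} \<union> \<delta>)"
  unfolding mixed_sat_def by auto

lemma mixed_sat_join_premise:
  "(z \<in> p \<longleftrightarrow> x \<in> p \<or> y \<in> p) \<Longrightarrow>
     mixed_sat p c (\<gamma> \<union> {z}) \<delta> \<longleftrightarrow> mixed_sat p c (\<gamma> \<union> {x}) \<delta> \<and> mixed_sat p c (\<gamma> \<union> {y}) \<delta>"
  unfolding mixed_sat_def by auto

lemma G_disjunctive_if_disj_compatible:
  assumes rep: "is_rep V one zero R L" and "disj_compatible V (based_list L)"
  shows "\<exists>f. G_disjunctive V R f"
proof -
  define join where "join x y z \<longleftrightarrow> z \<in> V \<and> (\<forall>D\<in>set (based_list L). z \<in> D \<longleftrightarrow> x \<in> D \<or> y \<in> D)"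
    for x y z
  define f where "f x y = (SOME z. join x y z)" for x y
  have f: "join x y (f x y)" if "x \<in> V" "y \<in> V" for x y
  proof -
    have "\<exists>z. join x y z"
      using assms(2) that unfolding disj_compatible_iff join_def by blast
    then show ?thesis
      unfolding f_def by (rule someI_ex)
  qed
  have "G_disjunctive V R f"
    unfolding G_disjunctive_def
  proof (intro ballI conjI allI impI)
    fix x y assume xy: "x \<in> V" "y \<in> V"
    then show "f x y \<in> V"
      using f unfolding join_def by blast
  next
    fix x y \<gamma> \<delta> assume xy: "x \<in> V" "y \<in> V" and sub: "\<gamma> \<subseteq> V" "\<delta> \<subseteq> V"
    have joins: "f x y \<in> p \<longleftrightarrow> x \<in> p \<or> y \<in> p" "f x y \<in> c \<longleftrightarrow> x \<in> c \<or> y \<in> c"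
      if "(p, c) \<in> set L" for p c
    proof -
      have "p \<in> set (based_list L)" "c \<in> set (based_list L)"
        using that unfolding set_based_list by blast+
      then show "f x y \<in> p \<longleftrightarrow> x \<in> p \<or> y \<in> p" "f x y \<in> c \<longleftrightarrow> x \<in> c \<or> y \<in> c"
        using f[OF xy] unfolding join_def by blast+
    qed
    have V: "{f x y} \<union> \<delta> \<subseteq> V" "{x, y} \<union> \<delta> \<subseteq> V" "\<gamma> \<union> {f x y} \<subseteq> V" "\<gamma> \<union> {x} \<subseteq> V" "\<gamma> \<union> {y} \<subseteq> V"
      using f[OF xy] xy sub unfolding join_def by auto
    show "R \<gamma> ({f x y} \<union> \<delta>) \<longleftrightarrow> R \<gamma> ({x, y} \<union> \<delta>)"
      unfolding is_rep_sat_iff[OF rep sub(1) V(1)] is_rep_sat_iff[OF rep sub(1) V(2)]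
      using mixed_sat_join_conclusion[OF joins(2)] by (simp add: Ball_def)
    show "R (\<gamma> \<union> {f x y}) \<delta> \<longleftrightarrow> R (\<gamma> \<union> {x}) \<delta> \<and> R (\<gamma> \<union> {y}) \<delta>"
      unfolding is_rep_sat_iff[OF rep V(3) sub(2)] is_rep_sat_iff[OF rep V(4) sub(2)] is_rep_sat_iff[OF rep V(5) sub(2)]
      using mixed_sat_join_premise[OF joins(1)] by (simp add: Ball_def) blast
  qed
  then show ?thesis
    by blast
qed

lemma disj_compatible_if_minimal_rep:
  assumes min: "minimal_rep V one zero R L" and f: "G_disjunctive V R f"
  shows "disj_compatible V (based_list L)"
  unfolding disj_compatible_iff
proof (intro ballI)
  fix x y assume xy: "x \<in> V" "y \<in> V"
  note fxy = G_disjunctiveD(1)[OF f xy]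
  have "f x y \<in> D \<longleftrightarrow> x \<in> D \<or> y \<in> D" if D_in: "D \<in> set (based_list L)" for D
  proof -
    obtain p c where pc: "(p, c) \<in> set L" and D: "D = p \<or> D = c"
      using D_in unfolding set_based_list by blast
    have pV: "p \<subseteq> V"
      using is_rep_designated[OF minimal_rep_is_rep[OF min] pc] unfolding designated_def by blast
    note refuted = minimal_rep_refutation_iff[OF min pc]
    have "\<not> R p ({f x y} \<union> (V - c)) \<longleftrightarrow> f x y \<notin> c"
      using refuted[OF subset_refl pV, of "{f x y}"] fxy by simp
    moreover have "\<not> R p ({x, y} \<union> (V - c)) \<longleftrightarrow> x \<notin> c \<and> y \<notin> c"
      using refuted[OF subset_refl pV, of "{x, y}"] xy by auto
    ultimately have "f x y \<in> c \<longleftrightarrow> x \<in> c \<or> y \<in> c"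
      using G_disjunctiveD(2)[OF f xy pV Diff_subset] by blast
    moreover have R_p: "R (p \<union> {w}) (V - c) \<longleftrightarrow> w \<notin> p" if "w \<in> V" for w
      using refuted[of "p \<union> {w}" "{}"] pV that by auto
    have "f x y \<in> p \<longleftrightarrow> x \<in> p \<or> y \<in> p"
      using G_disjunctiveD(3)[OF f xy pV Diff_subset] R_p[OF fxy] R_p[OF xy(1)] R_p[OF xy(2)] by blast
    ultimately show ?thesis
      using D by blast
  qed
  with fxy show "\<exists>z\<in>V. \<forall>D\<in>set (based_list L). z \<in> D \<longleftrightarrow> x \<in> D \<or> y \<in> D"
    by blast
qed

fun lift :: "'c fm \<Rightarrow> 'c option fm" where
  "lift (Atom n) = Atom n"
| "lift (App c As) = App (Some c) (map lift As)"

lemma wf_lift: "wf ar A \<Longrightarrow> wf (ext_ar ar) (lift A)"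
  by (induction A) auto

lemma eval_lift: "eval (ext_I I f) v (lift A) = eval I v A"
  by (induction A) (auto cong: map_cong)

lemma constant_expressive_ext:
  "constant_expressive V ar I \<Longrightarrow> constant_expressive V (ext_ar ar) (ext_I I f)"
  unfolding constant_expressive_def by (metis wf_lift eval_lift)

lemma truth_functional_ext:
  assumes "truth_functional V ar I" "\<forall>x\<in>V. \<forall>y\<in>V. f x y \<in> V"
  shows "truth_functional V (ext_ar ar) (ext_I I f)"
  unfolding truth_functional_def
proof (intro allI impI)
  fix c and xs :: "'a list"
  assume "length xs = ext_ar ar c" "set xs \<subseteq> V"
  then show "ext_I I f c xs \<in> V"
    using assms by (cases c) (auto simp: truth_functional_def numeral_2_eq_2 length_Suc_conv)
qed

lemma eval_in_V:
  assumes "truth_functional V ar I" "valuation V v"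
  shows "wf ar A \<Longrightarrow> eval I v A \<in> V"
proof (induction A)
  case (Atom n)
  then show ?case
    using assms(2) by (simp add: valuation_def)
next
  case (App c As)
  then have "set (map (eval I v) As) \<subseteq> V" "length (map (eval I v) As) = ar c"
    by auto
  then show ?case
    using assms(1) unfolding truth_functional_def by simp
qed

lemma conseq_constant:
  assumes "valuation V v\<^sub>0"
    and "\<forall>A\<in>\<Gamma> \<union> \<Delta>. \<forall>v. valuation V v \<longrightarrow> eval J v A = eval J v\<^sub>0 A"
  shows "conseq V J R \<Gamma> \<Delta> \<longleftrightarrow> R (eval J v\<^sub>0 ` \<Gamma>) (eval J v\<^sub>0 ` \<Delta>)"
proof -
  have "eval J v ` \<Gamma> = eval J v\<^sub>0 ` \<Gamma> \<and> eval J v ` \<Delta> = eval J v\<^sub>0 ` \<Delta>" if "valuation V v" for v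
    using assms(2) that by (auto intro: image_cong)
  then show ?thesis
    unfolding conseq_def using assms(1) by metis
qed

lemma admits_G_disjunction_if_G_disjunctive:
  assumes tf: "truth_functional V ar I" and f: "G_disjunctive V R f"
  shows "admits_G_disjunction V R ar I"
  unfolding admits_G_disjunction_def
proof (intro exI[of _ f] conjI allI impI)
  show fV: "\<forall>x\<in>V. \<forall>y\<in>V. f x y \<in> V"
    using f unfolding G_disjunctive_def by blast
  let ?J = "ext_I I f"
  fix \<Gamma> \<Delta> A B
  assume wf: "\<forall>C\<in>\<Gamma>. wf (ext_ar ar) C" "\<forall>C\<in>\<Delta>. wf (ext_ar ar) C" "wf (ext_ar ar) A" "wf (ext_ar ar) B"
  have "(R (eval ?J v ` \<Gamma>) (eval ?J v ` ({Disj A B} \<union> \<Delta>)) \<longleftrightarrow> R (eval ?J v ` \<Gamma>) (eval ?J v ` ({A, B} \<union> \<Delta>))) \<and>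
        (R (eval ?J v ` (\<Gamma> \<union> {Disj A B})) (eval ?J v ` \<Delta>) \<longleftrightarrow>
           R (eval ?J v ` (\<Gamma> \<union> {A})) (eval ?J v ` \<Delta>) \<and> R (eval ?J v ` (\<Gamma> \<union> {B})) (eval ?J v ` \<Delta>))"
    if v: "valuation V v" for v
  proof -
    note in_V = eval_in_V[OF truth_functional_ext[OF tf fV] v]
    have "eval ?J v ` \<Gamma> \<subseteq> V" "eval ?J v ` \<Delta> \<subseteq> V" "eval ?J v A \<in> V" "eval ?J v B \<in> V"
      using wf in_V by blast+
    then show ?thesis
      using G_disjunctiveD[OF f] by (simp add: Disj_def)
  qed
  then show "conseq V ?J R \<Gamma> ({Disj A B} \<union> \<Delta>) \<longleftrightarrow> conseq V ?J R \<Gamma> ({A, B} \<union> \<Delta>)"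
    and "conseq V ?J R (\<Gamma> \<union> {Disj A B}) \<Delta> \<longleftrightarrow> conseq V ?J R (\<Gamma> \<union> {A}) \<Delta> \<and> conseq V ?J R (\<Gamma> \<union> {B}) \<Delta>"
    unfolding conseq_def by blast+
qed

lemma G_disjunctive_if_admits_G_disjunction:
  assumes ce: "constant_expressive V ar I" and "V \<noteq> {}"
    and "admits_G_disjunction V R ar I"
  shows "\<exists>f. G_disjunctive V R f"
proof -
  obtain f where fV: "\<forall>x\<in>V. \<forall>y\<in>V. f x y \<in> V"
    and G: "\<And>\<Gamma> \<Delta> A B. \<forall>C\<in>\<Gamma>. wf (ext_ar ar) C \<Longrightarrow> \<forall>C\<in>\<Delta>. wf (ext_ar ar) C \<Longrightarrow>
          wf (ext_ar ar) A \<Longrightarrow> wf (ext_ar ar) B \<Longrightarrow>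
          (conseq V (ext_I I f) R \<Gamma> ({Disj A B} \<union> \<Delta>) \<longleftrightarrow> conseq V (ext_I I f) R \<Gamma> ({A, B} \<union> \<Delta>)) \<and>
          (conseq V (ext_I I f) R (\<Gamma> \<union> {Disj A B}) \<Delta> \<longleftrightarrow>
             conseq V (ext_I I f) R (\<Gamma> \<union> {A}) \<Delta> \<and> conseq V (ext_I I f) R (\<Gamma> \<union> {B}) \<Delta>)"
    using assms(3) unfolding admits_G_disjunction_def by blast
  let ?J = "ext_I I f"
  have "\<forall>x\<in>V. \<exists>A. wf (ext_ar ar) A \<and> (\<forall>v. valuation V v \<longrightarrow> eval ?J v A = x)"
    using constant_expressive_ext[OF ce] unfolding constant_expressive_def .
  then obtain cst where cst: "\<forall>x\<in>V. wf (ext_ar ar) (cst x) \<and> (\<forall>v. valuation V v \<longrightarrow> eval ?J v (cst x) = x)"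
    by metis
  obtain x\<^sub>0 where "x\<^sub>0 \<in> V"
    using assms(2) by blast
  define v\<^sub>0 where "v\<^sub>0 = (\<lambda>_ :: nat. x\<^sub>0)"
  have v\<^sub>0: "valuation V v\<^sub>0"
    using \<open>x\<^sub>0 \<in> V\<close> by (simp add: v\<^sub>0_def valuation_def)
  have "G_disjunctive V R f"
    unfolding G_disjunctive_def
  proof (intro ballI conjI allI impI)
    fix x y assume "x \<in> V" "y \<in> V"
    then show "f x y \<in> V"
      using fV by blast
  next
    fix x y \<gamma> \<delta> assume xy: "x \<in> V" "y \<in> V" and sub: "\<gamma> \<subseteq> V" "\<delta> \<subseteq> V"
    let ?fmls = "{cst x, cst y, Disj (cst x) (cst y)} \<union> cst ` \<gamma> \<union> cst ` \<delta>"
    have const_fmls: "\<forall>C\<in>?fmls. \<forall>v. valuation V v \<longrightarrow> eval ?J v C = eval ?J v\<^sub>0 C"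
      using cst xy sub v\<^sub>0 by (auto simp: Disj_def)
    have conseq_eq: "conseq V ?J R \<Gamma> \<Delta> \<longleftrightarrow> R (eval ?J v\<^sub>0 ` \<Gamma>) (eval ?J v\<^sub>0 ` \<Delta>)"
      if "\<Gamma> \<union> \<Delta> \<subseteq> ?fmls" for \<Gamma> \<Delta>
      using that const_fmls by (intro conseq_constant[OF v\<^sub>0] ballI) blast
    have cst_values: "eval ?J v\<^sub>0 ` cst ` \<gamma> = \<gamma>" "eval ?J v\<^sub>0 ` cst ` \<delta> = \<delta>"
      "eval ?J v\<^sub>0 (cst x) = x" "eval ?J v\<^sub>0 (cst y) = y"
      "eval ?J v\<^sub>0 (Disj (cst x) (cst y)) = f x y"
      using cst xy sub v\<^sub>0 by (force simp: image_image Disj_def)+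
    have "\<forall>C\<in>cst ` \<gamma>. wf (ext_ar ar) C" "\<forall>C\<in>cst ` \<delta>. wf (ext_ar ar) C"
      "wf (ext_ar ar) (cst x)" "wf (ext_ar ar) (cst y)"
      using cst xy sub by blast+
    note G_cst = G[OF this]
    have "conseq V ?J R (cst ` \<gamma>) ({Disj (cst x) (cst y)} \<union> cst ` \<delta>) \<longleftrightarrow> R \<gamma> ({f x y} \<union> \<delta>)"
      "conseq V ?J R (cst ` \<gamma>) ({cst x, cst y} \<union> cst ` \<delta>) \<longleftrightarrow> R \<gamma> ({x, y} \<union> \<delta>)"
      "conseq V ?J R (cst ` \<gamma> \<union> {Disj (cst x) (cst y)}) (cst ` \<delta>) \<longleftrightarrow> R (\<gamma> \<union> {f x y}) \<delta>"
      "conseq V ?J R (cst ` \<gamma> \<union> {cst x}) (cst ` \<delta>) \<longleftrightarrow> R (\<gamma> \<union> {x}) \<delta>"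
      "conseq V ?J R (cst ` \<gamma> \<union> {cst y}) (cst ` \<delta>) \<longleftrightarrow> R (\<gamma> \<union> {y}) \<delta>"
      by (subst conseq_eq; auto simp: cst_values)+
    with G_cst show "R \<gamma> ({f x y} \<union> \<delta>) \<longleftrightarrow> R \<gamma> ({x, y} \<union> \<delta>)"
      and "R (\<gamma> \<union> {f x y}) \<delta> \<longleftrightarrow> R (\<gamma> \<union> {x}) \<delta> \<and> R (\<gamma> \<union> {y}) \<delta>"
      by simp_all
  qed
  then show ?thesis
    by blast
qed

lemma admits_G_disjunction_iff_G_disjunctive:
  assumes "truth_functional V ar I" "constant_expressive V ar I" "V \<noteq> {}"
  shows "admits_G_disjunction V R ar I \<longleftrightarrow> (\<exists>f. G_disjunctive V R f)"
  using G_disjunctive_if_admits_G_disjunction[OF assms(2,3)]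
    admits_G_disjunction_if_G_disjunctive[OF assms(1)] by blast

theorem theorem7p2:
  fixes V :: "'v set" and one zero :: 'v
    and R :: "'v set \<Rightarrow> 'v set \<Rightarrow> bool"
    and ar :: "'c \<Rightarrow> nat" and I :: "'c \<Rightarrow> 'v list \<Rightarrow> 'v"
  assumes "finite V" and "one \<in> V" and "zero \<in> V" and "one \<noteq> zero"
    and "intersective_mixed V one zero R"
    and "truth_functional V ar I"
    and "constant_expressive V ar I"
  shows "(admits_G_disjunction V R ar I \<longleftrightarrow>
            (\<forall>L. minimal_rep V one zero R L \<longrightarrow> disj_compatible V (based_list L)))
       \<and> ((\<forall>L. minimal_rep V one zero R L \<longrightarrow> disj_compatible V (based_list L)) \<longleftrightarrow>
            (\<exists>L. is_rep V one zero R L \<and> disj_compatible V (based_list L)))"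
proof -
  have admits_iff: "admits_G_disjunction V R ar I \<longleftrightarrow> (\<exists>f. G_disjunctive V R f)"
    using assms(2,6,7) admits_G_disjunction_iff_G_disjunctive by blast
  have i_ii: "\<forall>L. minimal_rep V one zero R L \<longrightarrow> disj_compatible V (based_list L)"
    if "admits_G_disjunction V R ar I"
    using that disj_compatible_if_minimal_rep unfolding admits_iff by metis
  have ii_iii: "\<exists>L. is_rep V one zero R L \<and> disj_compatible V (based_list L)"
    if "\<forall>L. minimal_rep V one zero R L \<longrightarrow> disj_compatible V (based_list L)"
    using minimal_rep_exists[OF assms(5)] minimal_rep_is_rep that by metis
  have iii_i: "admits_G_disjunction V R ar I"
    if "\<exists>L. is_rep V one zero R L \<and> disj_compatible V (based_list L)"
    using that G_disjunctive_if_disj_compatible unfolding admits_iff by metis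
  show ?thesis
    using i_ii ii_iii iii_i by blast
qed

end
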